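(* Let $G$ be a group acting faithfully by homeomorphisms on an infinite Hausdorff space $\mathcal{X}$, and let $U$ be an open subset of $\mathcal{X}$ such that its $G$-orbit $\{gU: g\in G\}$ is a basis of the topology of $\mathcal{X}$. Then every non-trivial normal subgroup of $G$ contains $R_U$.
   Context: For an open $U\subset\mathcal{X}$, $G_{(U)}$ denotes the subgroup of elements of $G$ acting trivially on $\mathcal{X}\setminus U$, and $R_U$ denotes the normal closure in $G$ of the derived subgroup $G_{(U)}'=[G_{(U)},G_{(U)}]$. *)

theory Defs
  imports "HOL-Analysis.Analysis" "HOL-Algebra.Algebra"
begin

definition rigid_stabilizer :: "('g, 'b) monoid_scheme \<Rightarrow> ('g \<Rightarrow> 'a \<Rightarrow> 'a) \<Rightarrow> 'a set \<Rightarrow> 'a set \<Rightarrow> 'g set"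
  where "rigid_stabilizer G \<phi> E U = {g \<in> carrier G. \<forall>x \<in> E - U. \<phi> g x = x}"

definition normal_closure :: "('g, 'b) monoid_scheme \<Rightarrow> 'g set \<Rightarrow> 'g set"
  where "normal_closure G S =
     generate G (\<Union>g \<in> carrier G. (\<lambda>h. g \<otimes>\<^bsub>G\<^esub> h \<otimes>\<^bsub>G\<^esub> inv\<^bsub>G\<^esub> g) ` S)"

definition R_sub :: "('g, 'b) monoid_scheme \<Rightarrow> ('g \<Rightarrow> 'a \<Rightarrow> 'a) \<Rightarrow> 'a set \<Rightarrow> 'a set \<Rightarrow> 'g set"
  where "R_sub G \<phi> E U = normal_closure G (derived G (rigid_stabilizer G \<phi> E U))"

end

theory Submission
  imports Defs
begin

(* Let N be a non-trivial normal subgroup and n \<in> N, n \<noteq> 1.  By faithfulness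
   n moves some point x; since n acts continuously and the space is Hausdorff, x has a
   neighbourhood displaced by n, and as the translates gU form a basis we may take it to be
   W = gU, so that W and nW are disjoint.  For a, b in the rigid stabilizer G_(W) the element
   d = n a\<inverse> n\<inverse> lies in G_(nW), hence commutes with b (disjoint supports), and a short
   computation in the normal subgroup N then gives [a,b] \<in> N. *)

text \<open>An element acting trivially off W maps W into itself (it permutes E and fixes E - W).\<close>
lemma (in group_action) rigid_stabilizer_maps_into:
  assumes "a \<in> rigid_stabilizer G \<phi> E W" "x \<in> E" "x \<in> W"
  shows "\<phi> a x \<in> W"
proof (rule ccontr)
  assume out: "\<phi> a x \<notin> W"
  have a: "a \<in> carrier G" "\<forall>y\<in>E-W. \<phi> a y = y"
    using assms(1) unfolding rigid_stabilizer_def by auto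
  have ax: "\<phi> a x \<in> E" using element_image[OF a(1) assms(2) refl] .
  then have "\<phi> a (\<phi> a x) = \<phi> a x" using a(2) out by blast
  then have "\<phi> a x = x" using inj_prop[OF a(1)] ax assms(2) by (meson inj_onD)
  then show False using out assms(3) by simp
qed

lemma (in group_action) rigid_stabilizer_inv:
  assumes "c \<in> rigid_stabilizer G \<phi> E U"
  shows "inv\<^bsub>G\<^esub> c \<in> rigid_stabilizer G \<phi> E U"
proof -
  interpret group G using group_hom group_hom.axioms(1) by blast
  show ?thesis using assms orbit_sym_aux unfolding rigid_stabilizer_def by auto
qed

lemma (in group_action) rigid_stabilizer_conj:
  assumes h: "h \<in> carrier G" and c: "c \<in> rigid_stabilizer G \<phi> E U"
  shows "h \<otimes>\<^bsub>G\<^esub> c \<otimes>\<^bsub>G\<^esub> inv\<^bsub>G\<^esub> h \<in> rigid_stabilizer G \<phi> E (\<phi> h ` U)"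
proof -
  interpret group G using group_hom group_hom.axioms(1) by blast
  have cG: "c \<in> carrier G" and fix_c: "\<forall>x\<in>E-U. \<phi> c x = x"
    using c unfolding rigid_stabilizer_def by auto
  have "\<phi> (h \<otimes> c \<otimes> inv h) z = z" if z: "z \<in> E" "z \<notin> \<phi> h ` U" for z
  proof -
    define w where "w = \<phi> (inv h) z"
    have wE: "w \<in> E" using element_image[OF inv_closed[OF h] z(1)] w_def by simp
    have hw: "\<phi> h w = z"
      using orbit_sym_aux[OF inv_closed[OF h] z(1)] w_def h by (simp add: inv_inv)
    then have "w \<notin> U" using z(2) by blast
    then have cw: "\<phi> c w = w" using fix_c wE by blast
    have "\<phi> (h \<otimes> c \<otimes> inv h) z = \<phi> h (\<phi> c w)"
      using z(1) wE h cG by (simp add: composition_rule w_def)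
    then show ?thesis using cw hw by simp
  qed
  then show ?thesis using h cG unfolding rigid_stabilizer_def by auto
qed

lemma (in faithful_action) commute_if_actions_commute:
  assumes "a \<in> carrier G" "d \<in> carrier G" "\<And>x. x \<in> E \<Longrightarrow> \<phi> a (\<phi> d x) = \<phi> d (\<phi> a x)"
  shows "a \<otimes>\<^bsub>G\<^esub> d = d \<otimes>\<^bsub>G\<^esub> a"
proof -
  interpret group G using group_hom group_hom.axioms(1) by auto
  have "\<phi> (a \<otimes> d) = \<phi> (d \<otimes> a)"
  proof (rule extensionalityI)
    show "\<phi> (a \<otimes> d) \<in> extensional E" "\<phi> (d \<otimes> a) \<in> extensional E"
      using bij_prop0 Bij_imp_extensional assms(1,2) m_closed by meson+
    show "\<phi> (a \<otimes> d) x = \<phi> (d \<otimes> a) x" if "x \<in> E" for x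
      using that composition_rule assms by simp
  qed
  then show ?thesis using faithful assms(1,2) by (meson m_closed inj_onD)
qed

lemma (in faithful_action) rigid_stabilizers_commute:
  assumes a: "a \<in> rigid_stabilizer G \<phi> E W" and d: "d \<in> rigid_stabilizer G \<phi> E W'"
    and disj: "W \<inter> W' = {}"
  shows "a \<otimes>\<^bsub>G\<^esub> d = d \<otimes>\<^bsub>G\<^esub> a"
proof (rule commute_if_actions_commute)
  show aG: "a \<in> carrier G" and dG: "d \<in> carrier G"
    using a d unfolding rigid_stabilizer_def by auto
  fix x assume x: "x \<in> E"
  have fix_a: "\<phi> a y = y" if "y \<in> E" "y \<notin> W" for y
    using a that unfolding rigid_stabilizer_def by auto
  have fix_d: "\<phi> d y = y" if "y \<in> E" "y \<notin> W'" for y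
    using d that unfolding rigid_stabilizer_def by auto
  have ax: "\<phi> a x \<in> E" and dx: "\<phi> d x \<in> E"
    using element_image aG dG x by blast+
  consider "x \<in> W" | "x \<in> W'" | "x \<notin> W" "x \<notin> W'" by blast
  then show "\<phi> a (\<phi> d x) = \<phi> d (\<phi> a x)"
  proof cases
    case 1
    then have "\<phi> a x \<notin> W'" "x \<notin> W'"
      using rigid_stabilizer_maps_into[OF a x] disj by blast+
    then show ?thesis by (simp add: fix_d ax x)
  next
    case 2
    then have "\<phi> d x \<notin> W" "x \<notin> W"
      using rigid_stabilizer_maps_into[OF d x] disj by blast+
    then show ?thesis by (simp add: fix_a dx x)
  qed (simp add: fix_a fix_d x)
qed

lemma (in faithful_action) moves_point:
  assumes "g \<in> carrier G" "g \<noteq> \<one>\<^bsub>G\<^esub>"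
  obtains x where "x \<in> E" "\<phi> g x \<noteq> x"
proof (rule ccontr)
  interpret group G using group_hom group_hom.axioms(1) by auto
  assume "\<not> thesis"
  then have fixes_all: "\<forall>x\<in>E. \<phi> g x = x" using that by blast
  have "\<phi> g = \<phi> \<one>"
  proof (rule extensionalityI)
    show "\<phi> g \<in> extensional E" "\<phi> \<one> \<in> extensional E"
      using bij_prop0 assms(1) one_closed Bij_imp_extensional by blast+
    show "\<phi> g x = \<phi> \<one> x" if "x \<in> E" for x
      using that fixes_all id_eq_one by (metis restrict_apply')
  qed
  then show False using faithful assms one_closed by (meson inj_onD)
qed

lemma (in group) inv_mult_cancel_left [simp]:
  "x \<in> carrier G \<Longrightarrow> y \<in> carrier G \<Longrightarrow> inv x \<otimes> (x \<otimes> y) = y"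
  by (metis m_assoc inv_closed l_inv l_one)

lemma (in group) mult_inv_cancel_left [simp]:
  "x \<in> carrier G \<Longrightarrow> y \<in> carrier G \<Longrightarrow> x \<otimes> (inv x \<otimes> y) = y"
  by (metis m_assoc inv_closed r_inv l_one)

lemma (in group) conj_commutator:
  assumes "g \<in> carrier G" "c1 \<in> carrier G" "c2 \<in> carrier G"
  shows "g \<otimes> (c1 \<otimes> c2 \<otimes> inv c1 \<otimes> inv c2) \<otimes> inv g =
    (g \<otimes> c1 \<otimes> inv g) \<otimes> (g \<otimes> c2 \<otimes> inv g) \<otimes> inv (g \<otimes> c1 \<otimes> inv g) \<otimes> inv (g \<otimes> c2 \<otimes> inv g)"
  using assms by (simp add: m_assoc inv_mult_group)

lemma (in normal) mem_if_conj_mem: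
  assumes "g \<in> carrier G" "x \<in> carrier G" "g \<otimes> x \<otimes> inv g \<in> H"
  shows "x \<in> H"
proof -
  have "inv g \<otimes> (g \<otimes> x \<otimes> inv g) \<otimes> g \<in> H" using inv_op_closed1 assms by blast
  then show ?thesis using assms(1,2) by (simp add: m_assoc)
qed

text \<open>The key algebraic step: if b commutes with the conjugate d = n a\<inverse> n\<inverse> for some n \<in> N,
  then [a, b] \<in> N, since [a, b] = m (b m\<inverse> b\<inverse>) with m = a d = [a, n] \<in> N.\<close>
lemma (in normal) commutator_mem_if_commutes_with_conj:
  assumes n: "n \<in> H" and a: "a \<in> carrier G" and b: "b \<in> carrier G"
    and comm: "b \<otimes> (n \<otimes> inv a \<otimes> inv n) = (n \<otimes> inv a \<otimes> inv n) \<otimes> b"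
  shows "a \<otimes> b \<otimes> inv a \<otimes> inv b \<in> H"
proof -
  have nG: "n \<in> carrier G" using n by (rule mem_carrier)
  define d where "d = n \<otimes> inv a \<otimes> inv n"
  define m where "m = a \<otimes> d"
  have dG: "d \<in> carrier G" using a nG d_def by simp
  have "m = (a \<otimes> n \<otimes> inv a) \<otimes> inv n" using a nG by (simp add: m_def d_def m_assoc)
  then have mH: "m \<in> H" using inv_op_closed2[OF a n] n by (simp add: m_closed m_inv_closed)
  have "a \<otimes> b \<otimes> inv a \<otimes> inv b = a \<otimes> (b \<otimes> d) \<otimes> (inv d \<otimes> inv a) \<otimes> inv b"
    using a b dG by (simp add: m_assoc)
  also have "\<dots> = a \<otimes> (d \<otimes> b) \<otimes> (inv d \<otimes> inv a) \<otimes> inv b"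
    using comm by (simp add: d_def)
  also have "\<dots> = m \<otimes> (b \<otimes> inv m \<otimes> inv b)"
    using a b dG by (simp add: m_def inv_mult_group m_assoc)
  also have "\<dots> \<in> H"
    using mH inv_op_closed2[OF b m_inv_closed[OF mH]] by (simp add: m_closed)
  finally show ?thesis .
qed

lemma (in normal) normal_closure_subset:
  assumes "S \<subseteq> H"
  shows "normal_closure G S \<subseteq> H"
proof -
  have "(\<Union>g \<in> carrier G. (\<lambda>h. g \<otimes> h \<otimes> inv g) ` S) \<subseteq> H"
    using assms inv_op_closed2 by blast
  then show ?thesis
    unfolding normal_closure_def using generate_subgroup_incl subgroup_axioms by blast
qed

lemma (in faithful_action) derived_rigid_stabilizer_in_normal:
  assumes N: "N \<lhd> G" and n: "n \<in> N" and disj: "W \<inter> \<phi> n ` W = {}"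
  shows "derived_set G (rigid_stabilizer G \<phi> E W) \<subseteq> N"
proof -
  interpret N: normal N G by fact
  have nG: "n \<in> carrier G" using n by (rule N.mem_carrier)
  have "a \<otimes>\<^bsub>G\<^esub> b \<otimes>\<^bsub>G\<^esub> inv\<^bsub>G\<^esub> a \<otimes>\<^bsub>G\<^esub> inv\<^bsub>G\<^esub> b \<in> N"
    if a: "a \<in> rigid_stabilizer G \<phi> E W" and b: "b \<in> rigid_stabilizer G \<phi> E W" for a b
  proof (rule N.commutator_mem_if_commutes_with_conj[OF n])
    show aG: "a \<in> carrier G" and "b \<in> carrier G" using a b unfolding rigid_stabilizer_def by auto
    have "n \<otimes>\<^bsub>G\<^esub> inv\<^bsub>G\<^esub> a \<otimes>\<^bsub>G\<^esub> inv\<^bsub>G\<^esub> n \<in> rigid_stabilizer G \<phi> E (\<phi> n ` W)"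
      using rigid_stabilizer_conj[OF nG rigid_stabilizer_inv[OF a]] .
    then show "b \<otimes>\<^bsub>G\<^esub> (n \<otimes>\<^bsub>G\<^esub> inv\<^bsub>G\<^esub> a \<otimes>\<^bsub>G\<^esub> inv\<^bsub>G\<^esub> n)
        = (n \<otimes>\<^bsub>G\<^esub> inv\<^bsub>G\<^esub> a \<otimes>\<^bsub>G\<^esub> inv\<^bsub>G\<^esub> n) \<otimes>\<^bsub>G\<^esub> b"
      using rigid_stabilizers_commute[OF b _ disj] by blast
  qed
  then show ?thesis by blast
qed

lemma (in group_action) derived_rigid_stabilizer_translate:
  assumes N: "N \<lhd> G" and g: "g \<in> carrier G"
    and sub: "derived_set G (rigid_stabilizer G \<phi> E (\<phi> g ` U)) \<subseteq> N"
  shows "derived_set G (rigid_stabilizer G \<phi> E U) \<subseteq> N"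
proof -
  interpret N: normal N G by fact
  have "c1 \<otimes>\<^bsub>G\<^esub> c2 \<otimes>\<^bsub>G\<^esub> inv\<^bsub>G\<^esub> c1 \<otimes>\<^bsub>G\<^esub> inv\<^bsub>G\<^esub> c2 \<in> N"
    if c1: "c1 \<in> rigid_stabilizer G \<phi> E U" and c2: "c2 \<in> rigid_stabilizer G \<phi> E U" for c1 c2
  proof (rule N.mem_if_conj_mem[OF g])
    have cG: "c1 \<in> carrier G" "c2 \<in> carrier G" using c1 c2 unfolding rigid_stabilizer_def by auto
    then show "c1 \<otimes>\<^bsub>G\<^esub> c2 \<otimes>\<^bsub>G\<^esub> inv\<^bsub>G\<^esub> c1 \<otimes>\<^bsub>G\<^esub> inv\<^bsub>G\<^esub> c2 \<in> carrier G" by simp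
    show "g \<otimes>\<^bsub>G\<^esub> (c1 \<otimes>\<^bsub>G\<^esub> c2 \<otimes>\<^bsub>G\<^esub> inv\<^bsub>G\<^esub> c1 \<otimes>\<^bsub>G\<^esub> inv\<^bsub>G\<^esub> c2) \<otimes>\<^bsub>G\<^esub> inv\<^bsub>G\<^esub> g \<in> N"
      unfolding N.conj_commutator[OF g cG]
      using sub rigid_stabilizer_conj[OF g c1] rigid_stabilizer_conj[OF g c2] by blast
  qed
  then show ?thesis by blast
qed

lemma displaced_basic_open:
  assumes T: "Hausdorff_space T" and base: "openin T = arbitrary union_of P"
    and f: "continuous_map T T f" and x: "x \<in> topspace T" "f x \<noteq> x"
  obtains W where "P W" "x \<in> W" "W \<inter> f ` W = {}"
proof -
  have "f x \<in> topspace T" using f x(1) unfolding continuous_map_def by blast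
  moreover have "x \<noteq> f x" using x(2) by simp
  ultimately obtain V1 V2 where V: "openin T V1" "openin T V2" "x \<in> V1" "f x \<in> V2" "disjnt V1 V2"
    using T x(1) unfolding Hausdorff_space_def by blast
  define V where "V = V1 \<inter> {z \<in> topspace T. f z \<in> V2}"
  have "openin T V"
    unfolding V_def using V(1) openin_continuous_map_preimage[OF f V(2)] by (rule openin_Int)
  moreover have "x \<in> V" using V x unfolding V_def by blast
  moreover have "\<forall>U x. openin T U \<and> x \<in> U \<longrightarrow> (\<exists>W. P W \<and> x \<in> W \<and> W \<subseteq> U)"
    using base unfolding openin_topology_base_unique by (rule conjunct2)
  ultimately obtain W where W: "P W" "x \<in> W" "W \<subseteq> V" by blast
  have "W \<subseteq> V1" "f ` W \<subseteq> V2" using W(3) unfolding V_def by auto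
  then have "W \<inter> f ` W = {}" using V(5) unfolding disjnt_def by blast
  with W(1,2) show thesis by (rule that)
qed

theorem lemma4p2:
  fixes G :: "('g, 'b) monoid_scheme" and T :: "'a topology" and \<phi> :: "'g \<Rightarrow> 'a \<Rightarrow> 'a"
    and U :: "'a set" and N :: "'g set"
  assumes "group G"
    and "faithful_action G (topspace T) \<phi>"
    and "\<forall>g \<in> carrier G. homeomorphic_map T T (\<phi> g)"
    and "Hausdorff_space T"
    and "infinite (topspace T)"
    and "openin T U"
    and "openin T = arbitrary union_of (\<lambda>V. V \<in> {\<phi> g ` U | g. g \<in> carrier G})"
    and "normal N G"
    and "N \<noteq> {\<one>\<^bsub>G\<^esub>}"
  shows "R_sub G \<phi> (topspace T) U \<subseteq> N"
proof -
  interpret N: normal N G by fact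
  have act: "group_action G (topspace T) \<phi>"
    using assms(2) by (rule faithful_action.axioms(1))
  have "\<exists>n \<in> N. n \<noteq> \<one>\<^bsub>G\<^esub>"
  proof (rule ccontr)
    assume "\<not> (\<exists>n \<in> N. n \<noteq> \<one>\<^bsub>G\<^esub>)"
    then have "N = {\<one>\<^bsub>G\<^esub>}" using N.one_closed by auto
    then show False using assms(9) by contradiction
  qed
  then obtain n where n: "n \<in> N" "n \<noteq> \<one>\<^bsub>G\<^esub>" by blast
  have nG: "n \<in> carrier G" using n(1) by (rule N.mem_carrier)
  obtain x where x: "x \<in> topspace T" "\<phi> n x \<noteq> x"
    using faithful_action.moves_point[OF assms(2) nG n(2)] .
  have cont: "continuous_map T T (\<phi> n)"
    using assms(3) nG by (simp add: homeomorphic_imp_continuous_map)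
  obtain W where W: "W \<in> {\<phi> g ` U | g. g \<in> carrier G}" and disj: "W \<inter> \<phi> n ` W = {}"
    using displaced_basic_open[OF assms(4,7) cont x] .
  from W obtain g where g: "g \<in> carrier G" and W_eq: "W = \<phi> g ` U" by blast
  have "derived_set G (rigid_stabilizer G \<phi> (topspace T) W) \<subseteq> N"
    using faithful_action.derived_rigid_stabilizer_in_normal[OF assms(2,8) n(1) disj] .
  then have "derived_set G (rigid_stabilizer G \<phi> (topspace T) U) \<subseteq> N"
    unfolding W_eq by (rule group_action.derived_rigid_stabilizer_translate[OF act assms(8) g])
  then have "derived G (rigid_stabilizer G \<phi> (topspace T) U) \<subseteq> N"
    unfolding derived_def by (rule N.generate_subgroup_incl[OF _ N.subgroup_axioms])
  then show ?thesis unfolding R_sub_def by (rule N.normal_closure_subset)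
qed

end
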